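(* Let $m,n\in\mathbb{N}$ and let $H_{m,n}=\langle x^m,y^n\rangle\le F$, where $x=x_0$ and $y=x_0^2x_1$. Then there is an element $h\in H_{m,n}$ and a dyadic fraction $\alpha\in(0,1)$ such that $h(\alpha)=\alpha$, $h'(\alpha^-)=1$ and $h'(\alpha^+)=2$.
   Context: Thompson's group $F$ is the group of piecewise linear homeomorphisms of $[0,1]$ with finitely many dyadic breakpoints and slopes integer powers of $2$; composition is from left to right. Writing numbers in $(0,1)$ as $.s$ with $s$ an infinite binary word, $x_0$ maps $.00\alpha\mapsto .0\alpha$, $.01\alpha\mapsto .10\alpha$, $.1\alpha\mapsto .11\alpha$, and $x_1$ maps $.0\alpha\mapsto .0\alpha$, $.100\alpha\mapsto .10\alpha$, $.101\alpha\mapsto .110\alpha$, $.11\alpha\mapsto .111\alpha$. Here $h'(\alpha^-)$ and $h'(\alpha^+)$ denote the left and right derivatives of $h$ at $\alpha$. *)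

theory Defs
  imports Complex_Main
begin

text \<open>Generators of Thompson's group F as maps of the reals; they act as stated
on [0,1] and are extended by the identity outside [0,1] (irrelevant to the statement).\<close>

definition x0 :: "real \<Rightarrow> real" where
  "x0 t = (if t < 0 \<or> t > 1 then t
           else if t \<le> 1/4 then 2 * t
           else if t \<le> 1/2 then t + 1/4
           else t / 2 + 1/2)"

definition x0inv :: "real \<Rightarrow> real" where
  "x0inv t = (if t < 0 \<or> t > 1 then t
           else if t \<le> 1/2 then t / 2
           else if t \<le> 3/4 then t - 1/4
           else 2 * t - 1)"

definition x1 :: "real \<Rightarrow> real" where
  "x1 t = (if t < 0 \<or> t > 1 then t
           else if t \<le> 1/2 then t
           else if t \<le> 5/8 then 2 * t - 1/2
           else if t \<le> 3/4 then t + 1/8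
           else t / 2 + 1/2)"

definition x1inv :: "real \<Rightarrow> real" where
  "x1inv t = (if t < 0 \<or> t > 1 then t
           else if t \<le> 1/2 then t
           else if t \<le> 3/4 then t / 2 + 1/4
           else if t \<le> 7/8 then t - 1/8
           else 2 * t - 1)"

text \<open>Composition is left to right: the product g h means "first g, then h",
i.e. the function h \<circ> g. Thus y = x0^2 x1 is x1 \<circ> x0 \<circ> x0.\<close>

definition ygen :: "real \<Rightarrow> real" where
  "ygen = x1 \<circ> x0 \<circ> x0"

definition ygen_inv :: "real \<Rightarrow> real" where
  "ygen_inv = x0inv \<circ> x0inv \<circ> x1inv"

inductive_set H :: "nat \<Rightarrow> nat \<Rightarrow> (real \<Rightarrow> real) set" for m n where
  H_id: "id \<in> H m n"
| H_x: "h \<in> H m n \<Longrightarrow> (x0 ^^ m) \<circ> h \<in> H m n"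
| H_xinv: "h \<in> H m n \<Longrightarrow> (x0inv ^^ m) \<circ> h \<in> H m n"
| H_y: "h \<in> H m n \<Longrightarrow> (ygen ^^ n) \<circ> h \<in> H m n"
| H_yinv: "h \<in> H m n \<Longrightarrow> (ygen_inv ^^ n) \<circ> h \<in> H m n"

definition dyadic :: "real \<Rightarrow> bool" where
  "dyadic a \<longleftrightarrow> (\<exists>(k::int) (j::nat). a = of_int k / 2 ^ j)"

end

theory Submission
  imports Defs
begin

text \<open>Near 0 the generator y = x0^2 x1 is t \<mapsto> 4t and x^-1 is t \<mapsto> t/2, so
  h = y^K x^-2K fixes a small interval [0, a] with a = 2^-(2K+1). Just to the right of a,
  however, y^K sends t to 4^K t \<ge> 1/2, where x^-1 acts as t \<mapsto> t - 1/4 instead of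
  halving; hence h(t) = 2t - a there. The element h with K = nm lies in H_{m,n}, and the
  dyadic point a is the required break point.\<close>

lemma comp_funpow_closed:
  assumes "\<And>g. g \<in> S \<Longrightarrow> f \<circ> g \<in> S" and "g \<in> S"
  shows "(f ^^ k) \<circ> g \<in> S"
proof (induction k)
  case 0
  then show ?case using \<open>g \<in> S\<close> by simp
next
  case (Suc k)
  then have "f \<circ> ((f ^^ k) \<circ> g) \<in> S" by (rule assms(1))
  then show ?case by (simp only: funpow.simps(2) comp_assoc)
qed

lemma funpow_eq_linear:
  fixes f :: "real \<Rightarrow> real"
  assumes f: "\<And>s. 0 \<le> s \<Longrightarrow> s \<le> b \<Longrightarrow> f s = c * s"
    and "0 \<le> c" "0 \<le> t" and orbit: "\<And>j. j < k \<Longrightarrow> c ^ j * t \<le> b"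
  shows "(f ^^ k) t = c ^ k * t"
  using orbit
proof (induction k)
  case 0
  then show ?case by simp
next
  case (Suc k)
  have "(f ^^ Suc k) t = f (c ^ k * t)" using Suc by simp
  also have "\<dots> = c ^ Suc k * t" using f[of "c ^ k * t"] Suc.prems \<open>0 \<le> c\<close> \<open>0 \<le> t\<close> by simp
  finally show ?case .
qed

lemma ygen_funpow_near_0:
  assumes "0 \<le> t" and "2 ^ (2 * k) * t \<le> 3/4"
  shows "(ygen ^^ k) t = 2 ^ (2 * k) * t"
proof -
  have four: "(2::real) ^ (2 * k) = 4 ^ k" by (simp add: power_mult)
  have "(ygen ^^ k) t = 4 ^ k * t"
  proof (rule funpow_eq_linear)
    show "ygen s = 4 * s" if "0 \<le> s" "s \<le> 3/16" for s
      using that by (simp add: ygen_def x0_def x1_def)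
    show "4 ^ j * t \<le> 3/16" if "j < k" for j
    proof -
      have "4 ^ Suc j * t \<le> 4 ^ k * t"
        using that \<open>0 \<le> t\<close> by (intro mult_right_mono power_increasing) auto
      then show ?thesis using assms(2) four by simp
    qed
  qed (use assms in auto)
  then show ?thesis by (simp only: four)
qed

lemma x0inv_funpow_near_0:
  assumes "0 \<le> s" and "s \<le> 1/2"
  shows "(x0inv ^^ k) s = s / 2 ^ k"
proof -
  have "(x0inv ^^ k) s = (1/2) ^ k * s"
  proof (rule funpow_eq_linear)
    show "(1/2) ^ j * s \<le> 1/2" for j
      using assms mult_mono[of "(1/2::real) ^ j" 1 s "1/2"] by (simp add: power_le_one)
  qed (use assms in \<open>auto simp: x0inv_def\<close>)
  then show ?thesis by (simp add: power_one_over)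
qed

lemma x0inv_funpow_Suc_second_piece:
  assumes "1/2 \<le> s" and "s \<le> 3/4"
  shows "(x0inv ^^ Suc k) s = (s - 1/4) / 2 ^ k"
proof -
  have "x0inv s = s - 1/4" using assms by (simp add: x0inv_def)
  moreover have "(x0inv ^^ Suc k) s = (x0inv ^^ k) (x0inv s)"
    by (simp only: funpow_Suc_right comp_def)
  ultimately show ?thesis using assms by (simp add: x0inv_funpow_near_0)
qed

definition break_elem :: "nat \<Rightarrow> real \<Rightarrow> real" where
  "break_elem K = (x0inv ^^ (2 * K)) \<circ> (ygen ^^ K)"

lemma break_elem_mem_H: "break_elem (n * m) \<in> H m n"
proof -
  have "((x0inv ^^ m) ^^ (2 * n)) \<circ> (((ygen ^^ n) ^^ m) \<circ> id) \<in> H m n"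
    by (intro comp_funpow_closed[OF H.H_xinv] comp_funpow_closed[OF H.H_y] H.H_id)
  then show ?thesis
    by (simp add: break_elem_def funpow_mult ac_simps)
qed

lemma break_elem_eq_id:
  assumes "0 \<le> t" and "t \<le> 1 / 2 ^ (2 * K + 1)"
  shows "break_elem K t = t"
proof -
  have "2 ^ (2 * K) * t \<le> 1/2"
    using mult_left_mono[OF assms(2), of "2 ^ (2 * K)"] by simp
  then show ?thesis
    using assms by (simp add: break_elem_def ygen_funpow_near_0 x0inv_funpow_near_0)
qed

lemma break_elem_eq_double:
  assumes "1 \<le> K" and "a = 1 / 2 ^ (2 * K + 1)" and "a \<le> t" and "t \<le> 3/2 * a"
  shows "break_elem K t = 2 * t - a"
proof -
  define s where "s = 2 ^ (2 * K) * t"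
  define k where "k = 2 * K - 1"
  have k: "2 * K = Suc k" using assms(1) by (simp add: k_def)
  have scale: "(2::real) ^ (2 * K) * a = 1/2" using assms(2) by simp
  have "1/2 \<le> s"
    using mult_left_mono[OF assms(3), of "2 ^ (2 * K)"] scale by (simp add: s_def)
  moreover have "s \<le> 3/4"
  proof -
    have "s \<le> 2 ^ (2 * K) * (3/2 * a)" using assms(4) by (simp add: s_def)
    also have "\<dots> = 3/4" using scale by (simp add: mult_ac)
    finally show ?thesis .
  qed
  ultimately have "(x0inv ^^ Suc k) s = (s - 1/4) / 2 ^ k"
    by (rule x0inv_funpow_Suc_second_piece)
  moreover have "(ygen ^^ K) t = s"
  proof -
    have "0 < a" using assms(2) by simp
    then have "0 \<le> t" using assms(3) by simp
    then show ?thesis using ygen_funpow_near_0 \<open>s \<le> 3/4\<close> by (simp add: s_def)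
  qed
  ultimately have "break_elem K t = (s - 1/4) / 2 ^ k"
    by (simp add: break_elem_def k)
  also have "\<dots> = 2 * t - a"
  proof -
    have "(2::real) ^ (2 * K) = 2 * 2 ^ k" by (simp only: k power_Suc)
    with assms(2) show ?thesis by (simp add: s_def field_simps)
  qed
  finally show ?thesis .
qed

lemma break_elem_left_derivative:
  "(break_elem K has_real_derivative 1) (at (1 / 2 ^ (2 * K + 1)) within {..1 / 2 ^ (2 * K + 1)})"
  (is "(_ has_real_derivative _) (at ?a within _)")
proof (rule has_field_derivative_transform_within[where f = "\<lambda>t. t" and d = ?a])
  fix t assume "t \<in> {..?a}" "dist t ?a < ?a"
  then show "t = break_elem K t" by (simp add: break_elem_eq_id dist_real_def)
qed auto

lemma break_elem_right_derivative:
  assumes "1 \<le> K"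
  shows "(break_elem K has_real_derivative 2) (at (1 / 2 ^ (2 * K + 1)) within {1 / 2 ^ (2 * K + 1)..})"
  (is "(_ has_real_derivative _) (at ?a within _)")
proof (rule has_field_derivative_transform_within[where f = "\<lambda>t. 2 * t - ?a" and d = "?a / 2"])
  show "((\<lambda>t. 2 * t - ?a) has_real_derivative 2) (at ?a within {?a..})"
    by (auto intro!: derivative_eq_intros)
  fix t assume "t \<in> {?a..}" "dist t ?a < ?a / 2"
  then show "2 * t - ?a = break_elem K t"
    using break_elem_eq_double[OF assms refl] by (simp add: dist_real_def)
qed auto

theorem lemma3p2:
  fixes m n :: nat
  assumes "m \<ge> 1" and "n \<ge> 1"
  shows "\<exists>h \<in> H m n. \<exists>\<alpha>. dyadic \<alpha> \<and> 0 < \<alpha> \<and> \<alpha> < 1 \<and> h \<alpha> = \<alpha> \<and>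
           (h has_real_derivative 1) (at \<alpha> within {..\<alpha>}) \<and>
           (h has_real_derivative 2) (at \<alpha> within {\<alpha>..})"
proof (intro bexI exI conjI)
  define K where "K = n * m"
  have "1 \<le> K" using assms by (simp add: K_def)
  let ?a = "1 / 2 ^ (2 * K + 1) :: real"
  show "dyadic ?a" unfolding dyadic_def by (intro exI[of _ 1] exI[of _ "2 * K + 1"]) simp
  show "0 < ?a" by simp
  have "(1::real) < 2 ^ (2 * K + 1)" by (rule one_less_power) auto
  then show "?a < 1" by simp
  show "break_elem K ?a = ?a" by (simp add: break_elem_eq_id)
  show "(break_elem K has_real_derivative 1) (at ?a within {..?a})"
    by (rule break_elem_left_derivative)
  show "(break_elem K has_real_derivative 2) (at ?a within {?a..})"
    using \<open>1 \<le> K\<close> by (rule break_elem_right_derivative)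
  show "break_elem K \<in> H m n" unfolding K_def by (rule break_elem_mem_H)
qed

end
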